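(* Suppose $a<\mathcal U_L^{-1}$ and that $\mathbf X^{RSAA}\in\mathcal S_p$ satisfies the S$^3$ONC$(\mathbf Z_1^n)$ almost surely. Then $$\mathbb P\big[\,|\sigma_j(\mathbf X^{RSAA})|\notin(0,a\lambda)\ \text{for all } j=1,\dots,p\,\big]=1.$$
   Context: $\mathcal S_p$ is the cone of $p\times p$ symmetric positive semidefinite matrices; $\sigma_j(\mathbf X)$ is the $j$-th eigenvalue (singular value) of $\mathbf X$. $Z_1,\dots,Z_n$ are i.i.d. random vectors in $\mathcal W\subseteq\mathbb R^q$, $f:\mathcal S_p\times\mathcal W\to\mathbb R$ measurable, $\mathcal F_n(\mathbf X,\mathbf Z_1^n)=\frac1n\sum_i f(\mathbf X,Z_i)$. For $a,\lambda>0$, $P_\lambda(x)=\int_0^x\frac{[a\lambda-t]_+}{a}dt$ and $\mathcal F_{n,\lambda}(\mathbf X,\mathbf Z_1^n)=\mathcal F_n(\mathbf X,\mathbf Z_1^n)+\sum_{j=1}^pP_\lambda(\sigma_j(\mathbf X))$. $\mathcal U_L\ge1$ is a constant. A matrix $\hat{\mathbf X}\in\mathcal S_p$ satisfies S$^3$ONC$(\mathbf Z_1^n)$ if (a) $\nabla\mathcal F_{n,\lambda}(\hat{\mathbf X},\mathbf Z_1^n)=0$, and (b) for every $j$ with $\sigma_j(\hat{\mathbf X})\in(0,a\lambda)$, $\mathcal U_L+\frac{\partial^2P_\lambda(\sigma_j(\mathbf X))}{[\partial\sigma_j(\mathbf X)]^2}\big|_{\mathbf X=\hat{\mathbf X}}\ge0$.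 *)

theory Defs
  imports "HOL-Analysis.Analysis" "HOL-Probability.Probability"
    "HOL-Computational_Algebra.Polynomial" "HOL-Library.Multiset"
begin

definition psd_cone :: "(real^'p^'p) set" where
  "psd_cone = {X. transpose X = X \<and> (\<forall>v. 0 \<le> v \<bullet> (X *v v))}"

definition charpoly :: "real^'p^'p \<Rightarrow> real poly" where
  "charpoly X = det (\<chi> i j. (if i = j then [:0, 1:] else 0) - [:X $ i $ j:])"

text \<open>Eigenvalues with multiplicity, sorted in decreasing order; sigma X j is the j-th (j = 1..p).\<close>
definition eigs :: "real^'p^'p \<Rightarrow> real list" where
  "eigs X = rev (sorted_list_of_multiset (proots (charpoly X)))"

definition sigma :: "real^'p^'p \<Rightarrow> nat \<Rightarrow> real" where
  "sigma X j = eigs X ! (j - 1)"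

definition P_pen :: "real \<Rightarrow> real \<Rightarrow> real \<Rightarrow> real" where
  "P_pen a lam x = integral {0..x} (\<lambda>t. max (a * lam - t) 0 / a)"

definition F_n :: "(real^'p^'p \<Rightarrow> 'w \<Rightarrow> real) \<Rightarrow> nat \<Rightarrow> (nat \<Rightarrow> 'w) \<Rightarrow> real^'p^'p \<Rightarrow> real" where
  "F_n f n Zs X = (\<Sum>i=1..n. f X (Zs i)) / real n"

definition F_nlam :: "real \<Rightarrow> real \<Rightarrow> (real^'p^'p \<Rightarrow> 'w \<Rightarrow> real) \<Rightarrow> nat \<Rightarrow> (nat \<Rightarrow> 'w)
    \<Rightarrow> real^'p^'p \<Rightarrow> real" where
  "F_nlam a lam f n Zs X = F_n f n Zs X + (\<Sum>j=1..CARD('p). P_pen a lam (sigma X j))"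

definition S3ONC :: "real \<Rightarrow> real \<Rightarrow> real \<Rightarrow> (real^'p^'p \<Rightarrow> 'w \<Rightarrow> real) \<Rightarrow> nat \<Rightarrow> (nat \<Rightarrow> 'w)
    \<Rightarrow> real^'p^'p \<Rightarrow> bool" where
  "S3ONC a lam UL f n Zs X \<longleftrightarrow>
     X \<in> psd_cone \<and>
     (F_nlam a lam f n Zs has_derivative (\<lambda>_. 0)) (at X within psd_cone) \<and>
     (\<forall>j\<in>{1..CARD('p)}. sigma X j \<in> {0<..<a * lam} \<longrightarrow>
        0 \<le> UL + deriv (deriv (P_pen a lam)) (sigma X j))"

end

theory Submission
  imports Defs "HOL-Computational_Algebra.Fundamental_Theorem_Algebra"
begin

(* On (0, a lam) the penalty is the quadratic lam x - x^2 / (2 a), whose second derivative is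
   -1/a; at an eigenvalue in that interval the second-order part of S3ONC would therefore give
   U_L >= 1/a, contradicting a U_L < 1.  Eigenvalues of a PSD matrix are nonnegative, so the
   absolute value changes nothing.  The real work is to see that sigma X j (j <= p) is an
   eigenvalue at all rather than the junk value of an out-of-range list index: all complex roots
   of the characteristic polynomial of a symmetric matrix are real, so it splits over the reals
   and has p real roots counted with multiplicity.  The conclusion holds at every sample point
   satisfying S3ONC. *)

lemma mat_matrix_vector_mult: "mat c *v v = c *s (v :: 'a::comm_semiring_1^'n)"
  by (simp add: vec_eq_iff matrix_vector_mult_def mat_def if_distrib[where f="\<lambda>x. x * y" for y]
      cong: if_cong)

lemma eigenvector_of_det_eq_0:
  fixes A :: "'a::field^'n^'n"
  assumes "det (mat c - A) = 0"
  obtains v where "v \<noteq> 0" "A *v v = c *s v"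
proof -
  obtain v where "v \<noteq> 0" "(mat c - A) *v v = 0"
    using assms by (metis invertible_det_nz invertible_left_inverse matrix_left_invertible_ker)
  then show ?thesis
    using that by (simp add: matrix_vector_mult_diff_rdistrib mat_matrix_vector_mult)
qed

lemma poly_det: "poly (det (M :: 'a::comm_ring_1 poly^'n^'n)) c = det (\<chi> i j. poly (M$i$j) c)"
  unfolding det_def by (simp add: poly_sum poly_prod)

lemma map_poly_of_real_add:
  "map_poly (of_real :: real \<Rightarrow> 'a::real_algebra_1) (p + q) = map_poly of_real p + map_poly of_real q"
  by (rule poly_eqI) (simp add: coeff_map_poly)

lemma map_poly_of_real_mult:
  "map_poly (of_real :: real \<Rightarrow> 'a::{real_algebra_1,comm_ring_1}) (p * q) =
     map_poly of_real p * map_poly of_real q"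
  by (rule poly_eqI) (simp add: coeff_map_poly coeff_mult of_real_sum)

lemma map_poly_of_real_sum:
  "map_poly (of_real :: real \<Rightarrow> 'a::real_algebra_1) (sum f A) = (\<Sum>x\<in>A. map_poly of_real (f x))"
  by (induction A rule: infinite_finite_induct) (auto simp: map_poly_of_real_add)

lemma map_poly_of_real_prod:
  "map_poly (of_real :: real \<Rightarrow> 'a::{real_algebra_1,comm_ring_1}) (prod f A) =
     (\<Prod>x\<in>A. map_poly of_real (f x))"
  by (induction A rule: infinite_finite_induct) (auto simp: map_poly_of_real_mult)

lemma map_poly_of_real_of_int:
  "map_poly (of_real :: real \<Rightarrow> 'a::{real_algebra_1,comm_ring_1}) (of_int k) = of_int k"
  by (rule poly_eqI) (simp add: coeff_map_poly of_int_poly coeff_pCons split: nat.split)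

lemma map_poly_of_real_det:
  "map_poly (of_real :: real \<Rightarrow> 'a::{real_algebra_1,comm_ring_1}) (det M) =
     det (\<chi> i j. map_poly of_real (M$i$j))"
  unfolding det_def
  by (simp add: map_poly_of_real_sum map_poly_of_real_prod map_poly_of_real_mult
      map_poly_of_real_of_int)

lemma poly_map_poly_of_real:
  "poly (map_poly (of_real :: real \<Rightarrow> 'a::{real_algebra_1,comm_ring_1}) p) (of_real x) =
     of_real (poly p x)"
  by (induction p) (simp_all add: map_poly_pCons)

lemma poly_charpoly: "poly (charpoly X) r = det (mat r - X)"
  unfolding charpoly_def poly_det by (rule arg_cong[where f=det]) (auto simp: vec_eq_iff mat_def)

lemma poly_map_poly_of_real_charpoly:
  "poly (map_poly complex_of_real (charpoly X)) c = det (mat c - (\<chi> i j. complex_of_real (X$i$j)))"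
  unfolding charpoly_def map_poly_of_real_det poly_det
  by (rule arg_cong[where f=det]) (auto simp: vec_eq_iff mat_def map_poly_pCons)

lemma degree_prod_permutation_le:
  fixes M :: "'a::comm_ring_1 poly^'n^'n"
  assumes "\<And>i. degree (M$i$i) \<le> 1" and "\<And>i j. i \<noteq> j \<Longrightarrow> degree (M$i$j) = 0"
    and "p i0 \<noteq> i0"
  shows "degree (\<Prod>i\<in>UNIV. M$i$p i) \<le> CARD('n) - 1"
proof -
  have "degree (\<Prod>i\<in>UNIV. M$i$p i) \<le> (\<Sum>i\<in>UNIV. degree (M$i$p i))"
    using degree_prod_sum_le[of UNIV "\<lambda>i. M$i$p i"] by (simp add: o_def)
  also have "\<dots> \<le> (\<Sum>i\<in>UNIV. if i = i0 then 0 else 1)"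
  proof (rule sum_mono)
    fix i
    show "degree (M$i$p i) \<le> (if i = i0 then 0 else 1)"
      using assms(1)[of i] assms(2)[of i "p i"] assms(3) by (cases "p i = i") auto
  qed
  also have "\<dots> = CARD('n) - 1"
    by (simp add: sum.If_cases Compl_eq_Diff_UNIV card_Diff_singleton)
  finally show ?thesis .
qed

lemma degree_det_linear_diagonal:
  fixes M :: "'a::idom poly^'n^'n"
  assumes diag: "\<And>i. degree (M$i$i) = 1" and off_diag: "\<And>i j. i \<noteq> j \<Longrightarrow> degree (M$i$j) = 0"
  shows "degree (det M) = CARD('n)"
proof -
  define S where "S = {p. p permutes (UNIV::'n set)}"
  define summand where "summand p = of_int (sign p) * (\<Prod>i\<in>UNIV. M$i$p i)" for p
  have "finite S" "id \<in> S"
    unfolding S_def by (simp_all add: finite_permutations permutes_id)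
  then have "det M = summand id + sum summand (S - {id})"
    unfolding det_def summand_def S_def[symmetric] by (simp add: sum.remove)
  moreover have "degree (summand id) = CARD('n)"
  proof -
    have "M$i$i \<noteq> 0" for i using diag[of i] by auto
    then show ?thesis
      unfolding summand_def by (simp add: sign_id degree_prod_eq_sum_degree diag)
  qed
  moreover have "degree (sum summand (S - {id})) \<le> CARD('n) - 1"
  proof (intro degree_sum_le)
    fix p assume "p \<in> S - {id}"
    then obtain i0 where "p i0 \<noteq> i0" by (metis DiffE id_apply ext singletonI)
    with diag off_diag have "degree (\<Prod>i\<in>UNIV. M$i$p i) \<le> CARD('n) - 1"
      by (intro degree_prod_permutation_le) auto
    then show "degree (summand p) \<le> CARD('n) - 1"
      unfolding summand_def
      using degree_mult_le[of "of_int (sign p)" "\<Prod>i\<in>UNIV. M$i$p i"] by simp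
  qed (use \<open>finite S\<close> in auto)
  moreover have "CARD('n) - 1 < CARD('n)" by simp
  ultimately show ?thesis by (metis degree_add_eq_left le_less_trans)
qed

lemma degree_charpoly: "degree (charpoly (X::real^'n^'n)) = CARD('n)"
  unfolding charpoly_def by (rule degree_det_linear_diagonal) auto

lemma size_proots_eq_degree_if_complex_roots_real:
  fixes P :: "real poly"
  assumes "P \<noteq> 0" and "\<And>c. poly (map_poly complex_of_real P) c = 0 \<Longrightarrow> c \<in> \<real>"
  shows "size (proots P) = degree P"
  using assms
proof (induction "degree P" arbitrary: P)
  case 0
  then obtain a where "P = [:a:]" by (metis degree_eq_zeroE)
  then show ?case by simp
next
  case (Suc m)
  let ?Q = "map_poly complex_of_real P"
  have "degree ?Q = Suc m" using Suc.hyps(2) by (simp add: degree_map_poly)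
  then obtain c where "poly ?Q c = 0"
    using fundamental_theorem_of_algebra constant_degree by (metis nat.distinct(1))
  moreover from this have "c \<in> \<real>" by (rule Suc.prems(2))
  ultimately obtain r where "poly P r = 0"
    by (metis Reals_cases poly_map_poly_of_real of_real_eq_0_iff)
  then obtain R where PR: "P = [:-r, 1:] * R" by (metis dvdE poly_eq_0_iff_dvd)
  with Suc.prems(1) have "R \<noteq> 0" by auto
  have "degree ([:-r, 1:] * R) = degree [:-r, 1:] + degree R"
    by (rule degree_mult_eq) (use \<open>R \<noteq> 0\<close> in auto)
  with PR Suc.hyps(2) have "degree R = m" by simp
  moreover have "c \<in> \<real>" if "poly (map_poly complex_of_real R) c = 0" for c
  proof (rule Suc.prems(2))
    show "poly (map_poly complex_of_real P) c = 0"
      unfolding PR map_poly_of_real_mult using that by simp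
  qed
  ultimately have "size (proots R) = m" using Suc.hyps(1) \<open>R \<noteq> 0\<close> by blast
  moreover have "proots P = proots [:-r, 1:] + proots R"
    unfolding PR by (rule proots_mult) (use \<open>R \<noteq> 0\<close> in auto)
  ultimately show ?case using Suc.hyps(2) by (simp add: proots_linear_factor)
qed

lemma symmetric_hermitian_form_real:
  fixes X :: "real^'n^'n" and v :: "complex^'n"
  assumes "transpose X = X"
  shows "(\<Sum>i\<in>UNIV. \<Sum>j\<in>UNIV. cnj (v$i) * of_real (X$i$j) * v$j) \<in> \<real>"
proof -
  have sym: "X$i$j = X$j$i" for i j
    using assms by (metis transpose_def vec_lambda_beta)
  have "cnj (\<Sum>i\<in>UNIV. \<Sum>j\<in>UNIV. cnj (v$i) * of_real (X$i$j) * v$j) =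
        (\<Sum>i\<in>UNIV. \<Sum>j\<in>UNIV. cnj (v$j) * of_real (X$j$i) * v$i)"
    by (simp add: sym mult_ac)
  also have "\<dots> = (\<Sum>i\<in>UNIV. \<Sum>j\<in>UNIV. cnj (v$i) * of_real (X$i$j) * v$j)"
    by (rule sum.swap)
  finally show ?thesis by (simp add: Reals_cnj_iff)
qed

lemma symmetric_complex_eigenvalue_real:
  fixes X :: "real^'n^'n"
  assumes sym: "transpose X = X" and "v \<noteq> 0"
    and eigen: "(\<chi> i j. complex_of_real (X$i$j)) *v v = c *s v"
  shows "c \<in> \<real>"
proof -
  define norm2 where "norm2 = (\<Sum>i\<in>UNIV. (cmod (v$i))^2)"
  have row: "(\<Sum>j\<in>UNIV. of_real (X$i$j) * v$j) = c * v$i" for i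
    using eigen by (simp add: vec_eq_iff matrix_vector_mult_def)
  have "(\<Sum>i\<in>UNIV. \<Sum>j\<in>UNIV. cnj (v$i) * of_real (X$i$j) * v$j) =
        (\<Sum>i\<in>UNIV. cnj (v$i) * (\<Sum>j\<in>UNIV. of_real (X$i$j) * v$j))"
    by (simp add: sum_distrib_left mult.assoc)
  also have "\<dots> = (\<Sum>i\<in>UNIV. c * (v$i * cnj (v$i)))"
    unfolding row by (simp add: mult_ac)
  also have "\<dots> = c * of_real norm2"
    unfolding norm2_def of_real_sum complex_norm_square by (simp add: sum_distrib_left)
  finally have "c * of_real norm2 \<in> \<real>"
    using symmetric_hermitian_form_real[OF sym, of v] by simp
  moreover obtain k where "v$k \<noteq> 0"
    using \<open>v \<noteq> 0\<close> by (metis vec_eq_iff zero_index)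
  then have "norm2 > 0"
    unfolding norm2_def by (intro sum_pos2[of UNIV k]) auto
  ultimately show ?thesis
    by (metis Reals_divide Reals_of_real nonzero_mult_div_cancel_right of_real_eq_0_iff less_irrefl)
qed

lemma symmetric_charpoly_complex_roots_real:
  fixes X :: "real^'n^'n"
  assumes "transpose X = X" and "poly (map_poly complex_of_real (charpoly X)) c = 0"
  shows "c \<in> \<real>"
proof -
  obtain v where "v \<noteq> 0" "(\<chi> i j. complex_of_real (X$i$j)) *v v = c *s v"
    using assms(2) unfolding poly_map_poly_of_real_charpoly by (rule eigenvector_of_det_eq_0)
  with assms(1) show ?thesis by (rule symmetric_complex_eigenvalue_real)
qed

lemma charpoly_nonzero: "charpoly X \<noteq> 0"
  using degree_charpoly[of X] by (metis degree_0 zero_less_card_finite less_irrefl)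

lemma length_eigs_symmetric:
  fixes X :: "real^'n^'n"
  assumes "transpose X = X"
  shows "length (eigs X) = CARD('n)"
proof -
  have "size (proots (charpoly X)) = degree (charpoly X)"
    using charpoly_nonzero symmetric_charpoly_complex_roots_real[OF assms]
    by (rule size_proots_eq_degree_if_complex_roots_real)
  then show ?thesis
    unfolding eigs_def degree_charpoly by (metis length_rev mset_sorted_list_of_multiset size_mset)
qed

lemma symmetric_sigma_charpoly_root:
  fixes X :: "real^'n^'n"
  assumes "transpose X = X" and "j \<in> {1..CARD('n)}"
  shows "poly (charpoly X) (sigma X j) = 0"
proof -
  have "sigma X j \<in> set (eigs X)"
    unfolding sigma_def using assms(2) length_eigs_symmetric[OF assms(1)] by auto
  then show ?thesis
    unfolding eigs_def using charpoly_nonzero[of X] by simp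
qed

lemma psd_cone_charpoly_root_nonneg:
  assumes "X \<in> psd_cone" and "poly (charpoly X) r = 0"
  shows "0 \<le> r"
proof -
  obtain v where "v \<noteq> 0" "X *v v = r *s v"
    using assms(2) unfolding poly_charpoly by (rule eigenvector_of_det_eq_0)
  moreover have "0 \<le> v \<bullet> (X *v v)"
    using assms(1) by (simp add: psd_cone_def)
  ultimately have "0 \<le> r * (v \<bullet> v)" and "0 < v \<bullet> v"
    by (simp_all add: scalar_mult_eq_scaleR)
  then show ?thesis by (simp add: zero_le_mult_iff)
qed

lemma psd_cone_sigma_nonneg:
  assumes "X \<in> psd_cone" and "j \<in> {1..CARD('n)}"
  shows "0 \<le> sigma (X :: real^'n^'n) j"
  using assms psd_cone_def psd_cone_charpoly_root_nonneg symmetric_sigma_charpoly_root by blast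

lemma P_pen_eq_quadratic:
  assumes a: "a > 0" and y: "0 \<le> y" "y \<le> a * lam"
  shows "P_pen a lam y = lam * y - y^2 / (2 * a)"
proof -
  have "integral {0..y} (\<lambda>t. max (a * lam - t) 0 / a) = integral {0..y} (\<lambda>t. lam - t / a)"
  proof (rule integral_cong)
    fix t assume "t \<in> {0..y}"
    then have "max (a * lam - t) 0 = a * lam - t" using y by auto
    then show "max (a * lam - t) 0 / a = lam - t / a" using a by (simp add: field_simps)
  qed
  also have "\<dots> = (lam * y - y^2 / (2 * a)) - (lam * 0 - 0^2 / (2 * a))"
  proof (rule integral_unique, rule fundamental_theorem_of_calculus)
    show "0 \<le> y" using y by simp
    fix x :: real
    have "((\<lambda>t. lam * t - t^2 / (2 * a)) has_real_derivative (lam - x / a)) (at x within {0..y})"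
      using a by (auto intro!: derivative_eq_intros simp: field_simps)
    then show "((\<lambda>t. lam * t - t^2 / (2 * a)) has_vector_derivative (lam - x / a)) (at x within {0..y})"
      by (simp add: has_real_derivative_iff_has_vector_derivative)
  qed
  finally show ?thesis unfolding P_pen_def by simp
qed

lemma deriv_P_pen:
  assumes a: "a > 0" and x: "0 < x" "x < a * lam"
  shows "deriv (P_pen a lam) x = lam - x / a"
proof -
  have "((\<lambda>t. lam * t - t^2 / (2 * a)) has_real_derivative (lam - x / a)) (at x)"
    using a by (auto intro!: derivative_eq_intros simp: field_simps)
  then have "(P_pen a lam has_real_derivative (lam - x / a)) (at x)"
    by (rule has_field_derivative_transform_within_open[where S="{0<..<a*lam}"])
       (use x a in \<open>auto simp: P_pen_eq_quadratic\<close>)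
  then show ?thesis by (rule DERIV_imp_deriv)
qed

lemma deriv2_P_pen:
  assumes a: "a > 0" and x: "0 < x" "x < a * lam"
  shows "deriv (deriv (P_pen a lam)) x = - 1 / a"
proof -
  have "((\<lambda>t. lam - t / a) has_real_derivative (- 1 / a)) (at x)"
    using a by (auto intro!: derivative_eq_intros)
  then have "(deriv (P_pen a lam) has_real_derivative (- 1 / a)) (at x)"
    by (rule has_field_derivative_transform_within_open[where S="{0<..<a*lam}"])
       (use x a in \<open>auto simp: deriv_P_pen\<close>)
  then show ?thesis by (rule DERIV_imp_deriv)
qed

lemma S3ONC_abs_sigma_notin:
  fixes X :: "real^'p^'p"
  assumes S3ONC: "S3ONC a lam UL f n Zs X" and "0 < a" "0 < UL" "a < 1 / UL"
    and j: "j \<in> {1..CARD('p)}"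
  shows "\<bar>sigma X j\<bar> \<notin> {0<..<a * lam}"
proof
  assume "\<bar>sigma X j\<bar> \<in> {0<..<a * lam}"
  moreover have "0 \<le> sigma X j"
    using S3ONC j psd_cone_sigma_nonneg by (auto simp: S3ONC_def)
  ultimately have "sigma X j \<in> {0<..<a * lam}" by simp
  then have "0 \<le> UL - 1 / a"
    using S3ONC j deriv2_P_pen[OF \<open>0 < a\<close>] by (auto simp: S3ONC_def)
  moreover have "UL < 1 / a"
    using \<open>0 < a\<close> \<open>0 < UL\<close> \<open>a < 1 / UL\<close> by (simp add: field_simps)
  ultimately show False by simp
qed

theorem proposition8:
  fixes M :: "'s measure"
    and Z :: "nat \<Rightarrow> 's \<Rightarrow> real^'q"
    and W :: "(real^'q) set"
    and f :: "real^'p^'p \<Rightarrow> real^'q \<Rightarrow> real"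
    and n :: nat and a lam UL :: real
    and XR :: "'s \<Rightarrow> real^'p^'p"
  assumes "prob_space M"
    and "n \<ge> 1"
    and "a > 0" and "lam > 0" and "UL \<ge> 1"
    and "\<forall>i\<in>{1..n}. Z i \<in> borel_measurable M"
    and "prob_space.indep_vars M (\<lambda>_. borel) Z {1..n}"
    and "\<forall>i\<in>{1..n}. distr M borel (Z i) = distr M borel (Z 1)"
    and "\<forall>i\<in>{1..n}. \<forall>\<omega>\<in>space M. Z i \<omega> \<in> W"
    and "(\<lambda>(X, z). f X z) \<in> borel_measurable borel"
    and "a < 1 / UL"
    and "\<forall>\<omega>\<in>space M. XR \<omega> \<in> psd_cone"
    and "AE \<omega> in M. S3ONC a lam UL f n (\<lambda>i. Z i \<omega>) (XR \<omega>)"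
  shows "AE \<omega> in M. \<forall>j\<in>{1..CARD('p)}. \<bar>sigma (XR \<omega>) j\<bar> \<notin> {0<..<a * lam}"
proof -
  have "0 < UL" using \<open>UL \<ge> 1\<close> by simp
  from \<open>AE \<omega> in M. S3ONC a lam UL f n (\<lambda>i. Z i \<omega>) (XR \<omega>)\<close> show ?thesis
    by (rule eventually_mono)
      (use S3ONC_abs_sigma_notin \<open>0 < a\<close> \<open>0 < UL\<close> \<open>a < 1 / UL\<close> in blast)
qed

end
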